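(* Let $(G,\cdot)$ be a semigroup, $(G,\curlywedge)$ a semilattice on the same set $G$, and $\xi,\delta\subseteq G\times G$ binary relations. Then the algebraic system $(G,\cdot,\curlywedge,\xi,\delta)$ is isomorphic to some transformative $\cap$-semigroup of transformations $(\Phi,\cdot,\cap,\xi_\Phi,\delta_\Phi)$ if and only if all of the following hold: (1) $\xi$ is left regular (i.e. $(u,v)\in\xi\Rightarrow(xu,xv)\in\xi$ for all $x,u,v\in G$) and contains the semilattice order $\zeta$; (2) $\delta$ is a left ideal of $(G,\cdot)$ (i.e. $(x,y)\in\delta\Rightarrow(ux,y)\in\delta$ for all $x,y,u\in G$); (3) for all $x,y,z,u,v\in G$: $x(y\curlywedge z)=xy\curlywedge xz$; \ $x\leqslant y\wedge u\leqslant v\wedge y\downarrow v\Rightarrow u\downarrow x$; \ $x\downarrow y\Rightarrow (x\curlywedge y)u=xu\curlywedge yu$; (4) for all $x,y\in G$: $x\curlywedge y\in f_\xi(\{x\})\Rightarrow x\leqslant y$; \ $x\curlywedge y\in f_\xi(\{x,y\})\Rightarrow x\downarrow y$; \ $xy\in f_\xi(\{x\})\Rightarrow x\vdash y$.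
   Context: Notation on $G$: $x\leqslant y$ iff $x\curlywedge y=x$ (this is the semilattice order, denoted $\zeta$); $x\downarrow y$ iff $(x,y)\in\xi$; $x\vdash y$ iff $(x,y)\in\delta$. $G^*=G\cup\{e\}$ is the semigroup obtained from $(G,\cdot)$ by adjoining a new identity element $e\notin G$, and one sets by convention $e\leqslant e$, $e\vdash e$, and $x\vdash e$ for all $x\in G$. The formula $a\boxdot b\leqslant c$ abbreviates $a\vdash b\wedge ab\leqslant c$. A subset $H\subseteq G$ is called $f_\xi$-closed if for all $x,y,t\in G^*$ and $z,u,v\in G$: if $u\downarrow v$, $(u\curlywedge v)x\boxdot y\leqslant zt$, $u\in H$ and $vx\in H$, then $z\in H$. For $X\subseteq G$, $f_\xi(X)$ denotes the least $f_\xi$-closed subset of $G$ containing $X$ (the intersection of all $f_\xi$-closed subsets containing $X$). Transformations: for a nonempty set $A$, a transformation of $A$ is a partial map $A\to A$, regarded as a subset of $A\times A$; $\mathrm{pr}_1 f$ is its domain and $\mathrm{pr}_2 f$ its image. For transformations $f,g$, the product $f\cdot g$ is the composite "first $f$, then $g$": $(f\cdot g)(a)=g(f(a))$, defined exactly when $a\in\mathrm{pr}_1 f$ and $f(a)\in\mathrm{pr}_1 g$. A transformative $\cap$-semigroup of transformations is a system $(\Phi,\cdot,\cap,\xi_\Phi,\delta_\Phi)$ where $\Phi$ is a set of transformations of some nonempty set $A$ closed under this product and under set-theoretic intersection of subsets of $A\times A$, $\xi_\Phi=\{(f,g)\in\Phi^2: f$ and $g$ coincide on $\mathrm{pr}_1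 f\cap\mathrm{pr}_1 g\}$ (the semicompatibility relation; i.e. $f$ restricted to $\mathrm{pr}_1 g$ equals $g$ restricted to $\mathrm{pr}_1 f$), and $\delta_\Phi=\{(f,g)\in\Phi^2:\mathrm{pr}_2 f\subseteq\mathrm{pr}_1 g\}$ (the semiadjacency relation). An isomorphism preserves $\cdot$, $\curlywedge\mapsto\cap$, and the two relations in both directions. *)

theory Defs
  imports Main
begin

text \<open>The algebraic system (G, mult, meet, xi, delta) lives on the whole type 'a.
  G* = 'a option, with None playing the adjoined identity e.\<close>

definition sl_le :: "('a \<Rightarrow> 'a \<Rightarrow> 'a) \<Rightarrow> 'a \<Rightarrow> 'a \<Rightarrow> bool" where
  "sl_le meet x y \<longleftrightarrow> meet x y = x"

fun rmul :: "('a \<Rightarrow> 'a \<Rightarrow> 'a) \<Rightarrow> 'a \<Rightarrow> 'a option \<Rightarrow> 'a" where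
  "rmul mult a None = a"
| "rmul mult a (Some b) = mult a b"

fun dstar :: "('a \<times> 'a) set \<Rightarrow> 'a \<Rightarrow> 'a option \<Rightarrow> bool" where
  "dstar delta a None = True"
| "dstar delta a (Some b) = ((a, b) \<in> delta)"

definition f_closed ::
  "('a \<Rightarrow> 'a \<Rightarrow> 'a) \<Rightarrow> ('a \<Rightarrow> 'a \<Rightarrow> 'a) \<Rightarrow> ('a \<times> 'a) set \<Rightarrow> ('a \<times> 'a) set \<Rightarrow> 'a set \<Rightarrow> bool" where
  "f_closed mult meet xi delta H \<longleftrightarrow>
     (\<forall>x y t :: 'a option. \<forall>z u v :: 'a.
        (u, v) \<in> xi
        \<and> dstar delta (rmul mult (meet u v) x) y
        \<and> sl_le meet (rmul mult (rmul mult (meet u v) x) y) (rmul mult z t)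
        \<and> u \<in> H \<and> rmul mult v x \<in> H
        \<longrightarrow> z \<in> H)"

definition f_xi ::
  "('a \<Rightarrow> 'a \<Rightarrow> 'a) \<Rightarrow> ('a \<Rightarrow> 'a \<Rightarrow> 'a) \<Rightarrow> ('a \<times> 'a) set \<Rightarrow> ('a \<times> 'a) set \<Rightarrow> 'a set \<Rightarrow> 'a set" where
  "f_xi mult meet xi delta X = \<Inter>{H. f_closed mult meet xi delta H \<and> X \<subseteq> H}"

text \<open>Transformations (partial maps) of A are functional relations contained in A \<times> A.
  Product f \<cdot> g = f O g (first f, then g).\<close>
definition transformation :: "'b set \<Rightarrow> ('b \<times> 'b) set \<Rightarrow> bool" where
  "transformation A f \<longleftrightarrow> f \<subseteq> A \<times> A \<and> single_valued f"

definition semicompat :: "('b \<times> 'b) set \<Rightarrow> ('b \<times> 'b) set \<Rightarrow> bool" where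
  "semicompat f g \<longleftrightarrow> {p \<in> f. fst p \<in> Domain g} = {p \<in> g. fst p \<in> Domain f}"

definition semiadj :: "('b \<times> 'b) set \<Rightarrow> ('b \<times> 'b) set \<Rightarrow> bool" where
  "semiadj f g \<longleftrightarrow> Range f \<subseteq> Domain g"

definition transf_iso ::
  "('a \<Rightarrow> 'a \<Rightarrow> 'a) \<Rightarrow> ('a \<Rightarrow> 'a \<Rightarrow> 'a) \<Rightarrow> ('a \<times> 'a) set \<Rightarrow> ('a \<times> 'a) set
   \<Rightarrow> 'b set \<Rightarrow> ('b \<times> 'b) set set \<Rightarrow> ('a \<Rightarrow> ('b \<times> 'b) set) \<Rightarrow> bool" where
  "transf_iso mult meet xi delta A Phi h \<longleftrightarrow>
     A \<noteq> {}
     \<and> (\<forall>f \<in> Phi. transformation A f)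
     \<and> (\<forall>f \<in> Phi. \<forall>g \<in> Phi. f O g \<in> Phi)
     \<and> (\<forall>f \<in> Phi. \<forall>g \<in> Phi. f \<inter> g \<in> Phi)
     \<and> bij_betw h UNIV Phi
     \<and> (\<forall>x y. h (mult x y) = h x O h y)
     \<and> (\<forall>x y. h (meet x y) = h x \<inter> h y)
     \<and> (\<forall>x y. (x, y) \<in> xi \<longleftrightarrow> semicompat (h x) (h y))
     \<and> (\<forall>x y. (x, y) \<in> delta \<longleftrightarrow> semiadj (h x) (h y))"

end

theory Submission
  imports Defs
begin

text \<open>Necessity: in a \<inter>-semigroup of transformations the semilattice order is inclusion,
  semicompatibility and semiadjacency are pointwise conditions, and for every point \<open>a\<close> the
  set of elements whose domain contains \<open>a\<close> is \<open>f\<^sub>\<xi>\<close>-closed; the conditions follow by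
  reading them off the transformations.

  Sufficiency: for every \<open>f\<^sub>\<xi>\<close>-closed set \<open>H\<close>, \<open>s \<sim> t \<longleftrightarrow> s \<curlywedge> t \<in> H\<close> is an equivalence on
  \<open>H\<close> compatible with right multiplication. The points of the representation are the pairs
  \<open>(H, e)\<close> and \<open>(H, [t])\<close> with \<open>t \<in> H\<close>, and \<open>x\<close> acts by \<open>(H, a) \<mapsto> (H, [a x])\<close> whenever
  \<open>a x \<in> H\<close>. Looking at the point \<open>(H, e)\<close> for \<open>H = f\<^sub>\<xi>({x})\<close> resp. \<open>f\<^sub>\<xi>({x, y})\<close>, the last
  three conditions show that this action reflects the order (so it is faithful), \<open>\<xi>\<close> and \<open>\<delta>\<close>.\<close>

lemma semicompat_single_valued_iff:
  assumes "single_valued f" and "single_valued g"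
  shows "semicompat f g \<longleftrightarrow> (\<forall>a b c. (a, b) \<in> f \<longrightarrow> (a, c) \<in> g \<longrightarrow> b = c)"
proof
  assume compat: "semicompat f g"
  show "\<forall>a b c. (a, b) \<in> f \<longrightarrow> (a, c) \<in> g \<longrightarrow> b = c"
  proof (intro allI impI)
    fix a b c
    assume ab: "(a, b) \<in> f" and ac: "(a, c) \<in> g"
    then have "(a, b) \<in> {p \<in> f. fst p \<in> Domain g}" by auto
    then have "(a, b) \<in> g"
      using compat unfolding semicompat_def by auto
    with ac show "b = c"
      using single_valuedD[OF assms(2)] by blast
  qed
next
  assume agree: "\<forall>a b c. (a, b) \<in> f \<longrightarrow> (a, c) \<in> g \<longrightarrow> b = c"
  show "semicompat f g"
    unfolding semicompat_def
  proof (intro equalityI subsetI)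
    fix p
    assume "p \<in> {p \<in> f. fst p \<in> Domain g}"
    then obtain a b c where "p = (a, b)" "(a, b) \<in> f" "(a, c) \<in> g" by (cases p) auto
    with agree show "p \<in> {p \<in> g. fst p \<in> Domain f}" by auto
  next
    fix p
    assume "p \<in> {p \<in> g. fst p \<in> Domain f}"
    then obtain a b c where "p = (a, b)" "(a, b) \<in> g" "(a, c) \<in> f" by (cases p) auto
    with agree show "p \<in> {p \<in> f. fst p \<in> Domain g}" by auto
  qed
qed

lemma f_closedD:
  assumes "f_closed mult meet xi delta H" and "(u, v) \<in> xi"
    and "dstar delta (rmul mult (meet u v) x) y"
    and "sl_le meet (rmul mult (rmul mult (meet u v) x) y) (rmul mult z t)"
    and "u \<in> H" and "rmul mult v x \<in> H"
  shows "z \<in> H"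
  using assms unfolding f_closed_def by blast

lemma f_xi_closed: "f_closed mult meet xi delta (f_xi mult meet xi delta X)"
  unfolding f_closed_def
proof (intro allI impI, elim conjE)
  fix x y t z u v
  assume uv: "(u, v) \<in> xi" and d: "dstar delta (rmul mult (meet u v) x) y"
    and le: "sl_le meet (rmul mult (rmul mult (meet u v) x) y) (rmul mult z t)"
    and u: "u \<in> f_xi mult meet xi delta X" and v: "rmul mult v x \<in> f_xi mult meet xi delta X"
  show "z \<in> f_xi mult meet xi delta X"
    unfolding f_xi_def
  proof (rule InterI)
    fix H
    assume "H \<in> {H. f_closed mult meet xi delta H \<and> X \<subseteq> H}"
    with u v have H: "f_closed mult meet xi delta H" and "u \<in> H" and "rmul mult v x \<in> H"
      unfolding f_xi_def by auto
    then show "z \<in> H"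
      using f_closedD[OF H uv d le] by blast
  qed
qed

lemma f_xi_subset: "X \<subseteq> f_xi mult meet xi delta X"
  unfolding f_xi_def by blast

lemma f_xi_least:
  "f_closed mult meet xi delta H \<Longrightarrow> X \<subseteq> H \<Longrightarrow> f_xi mult meet xi delta X \<subseteq> H"
  unfolding f_xi_def by blast

text \<open>Conditions (1)--(4), in the order and shape of the theorem (hence the conjunctive
  premise of \<open>xi_antimono\<close>), so that the locale predicate unfolds to its conjunction.\<close>

locale transf_conditions =
  fixes mult meet :: "'a \<Rightarrow> 'a \<Rightarrow> 'a" and xi delta :: "('a \<times> 'a) set"
  assumes xi_left_regular: "\<And>x u v. (u, v) \<in> xi \<Longrightarrow> (mult x u, mult x v) \<in> xi"
    and sl_le_imp_xi: "\<And>x y. sl_le meet x y \<Longrightarrow> (x, y) \<in> xi"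
    and delta_left_ideal: "\<And>x y u. (x, y) \<in> delta \<Longrightarrow> (mult u x, y) \<in> delta"
    and mult_meet_distrib_left: "\<And>x y z. mult x (meet y z) = meet (mult x y) (mult x z)"
    and xi_antimono:
      "\<And>x y u v. sl_le meet x y \<and> sl_le meet u v \<and> (y, v) \<in> xi \<Longrightarrow> (u, x) \<in> xi"
    and mult_meet_distrib_right:
      "\<And>x y u. (x, y) \<in> xi \<Longrightarrow> mult (meet x y) u = meet (mult x u) (mult y u)"
    and f_xi_meet_imp_sl_le: "\<And>x y. meet x y \<in> f_xi mult meet xi delta {x} \<Longrightarrow> sl_le meet x y"
    and f_xi_meet_imp_xi: "\<And>x y. meet x y \<in> f_xi mult meet xi delta {x, y} \<Longrightarrow> (x, y) \<in> xi"
    and f_xi_mult_imp_delta: "\<And>x y. mult x y \<in> f_xi mult meet xi delta {x} \<Longrightarrow> (x, y) \<in> delta"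

locale transf_representation =
  fixes mult meet :: "'a \<Rightarrow> 'a \<Rightarrow> 'a" and xi delta :: "('a \<times> 'a) set"
    and h :: "'a \<Rightarrow> ('b \<times> 'b) set"
  assumes inj_h: "inj h"
    and single_valued_h: "single_valued (h x)"
    and h_mult: "h (mult x y) = h x O h y"
    and h_meet: "h (meet x y) = h x \<inter> h y"
    and xi_iff_semicompat: "(x, y) \<in> xi \<longleftrightarrow> semicompat (h x) (h y)"
    and delta_iff_semiadj: "(x, y) \<in> delta \<longleftrightarrow> semiadj (h x) (h y)"

lemma transf_iso_imp_representation:
  assumes "transf_iso mult meet xi delta A Phi h"
  shows "transf_representation mult meet xi delta h"
proof -
  from assms have bij: "bij_betw h UNIV Phi" and tr: "\<forall>f \<in> Phi. transformation A f"
    and "\<And>x y. h (mult x y) = h x O h y" and "\<And>x y. h (meet x y) = h x \<inter> h y"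
    and "\<And>x y. (x, y) \<in> xi \<longleftrightarrow> semicompat (h x) (h y)"
    and "\<And>x y. (x, y) \<in> delta \<longleftrightarrow> semiadj (h x) (h y)"
    unfolding transf_iso_def by auto
  moreover from bij tr have "inj h" and "\<And>x. single_valued (h x)"
    unfolding bij_betw_def transformation_def by auto
  ultimately show ?thesis
    by unfold_locales
qed

lemma representation_imp_transf_iso:
  assumes "transf_representation mult meet xi delta h"
  shows "transf_iso mult meet xi delta UNIV (range h) h"
proof -
  interpret transf_representation mult meet xi delta h by (fact assms)
  show ?thesis
    unfolding transf_iso_def transformation_def
  proof (intro conjI ballI)
    fix f g
    assume "f \<in> range h" and "g \<in> range h"
    then obtain x y where "f = h x" and "g = h y" by blast
    then show "f O g \<in> range h" and "f \<inter> g \<in> range h"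
      by (metis h_mult rangeI, metis h_meet rangeI)
  next
    show "f \<subseteq> UNIV \<times> UNIV" and "single_valued f" if "f \<in> range h" for f
      using that single_valued_h by auto
  qed (simp_all add: bij_betw_def inj_h h_mult h_meet xi_iff_semicompat delta_iff_semiadj)
qed

context transf_representation
begin

lemma sl_le_iff_subset: "sl_le meet x y \<longleftrightarrow> h x \<subseteq> h y"
proof -
  have "sl_le meet x y \<longleftrightarrow> h (meet x y) = h x"
    unfolding sl_le_def by (simp add: inj_eq[OF inj_h])
  then show ?thesis
    by (auto simp: h_meet)
qed

lemma xi_iff_agree: "(x, y) \<in> xi \<longleftrightarrow> (\<forall>a b c. (a, b) \<in> h x \<longrightarrow> (a, c) \<in> h y \<longrightarrow> b = c)"
  by (simp add: xi_iff_semicompat semicompat_single_valued_iff single_valued_h)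

lemma delta_iff_Range_Domain: "(x, y) \<in> delta \<longleftrightarrow> Range (h x) \<subseteq> Domain (h y)"
  by (simp add: delta_iff_semiadj semiadj_def)

lemma h_eqI: "h x = h y \<Longrightarrow> x = y"
  using inj_h by (simp add: inj_eq)

lemma single_valued_hD: "(a, b) \<in> h x \<Longrightarrow> (a, c) \<in> h x \<Longrightarrow> b = c"
  using single_valued_h by (blast dest: single_valuedD)

definition h_star :: "'a option \<Rightarrow> ('b \<times> 'b) set" where
  "h_star = case_option Id h"

lemma h_rmul: "h (rmul mult a x) = h a O h_star x"
  by (cases x) (auto simp: h_star_def h_mult)

lemma dstar_iff: "dstar delta a y \<longleftrightarrow> Range (h a) \<subseteq> Domain (h_star y)"
  by (cases y) (auto simp: h_star_def delta_iff_Range_Domain)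

lemma f_closed_Domain: "f_closed mult meet xi delta {z. a \<in> Domain (h z)}"
  unfolding f_closed_def
proof (intro allI impI, elim conjE)
  fix x y t z u v
  assume uv: "(u, v) \<in> xi" and d: "dstar delta (rmul mult (meet u v) x) y"
    and le: "sl_le meet (rmul mult (rmul mult (meet u v) x) y) (rmul mult z t)"
    and "u \<in> {z. a \<in> Domain (h z)}" and "rmul mult v x \<in> {z. a \<in> Domain (h z)}"
  then obtain b b' c where "(a, b) \<in> h u" "(a, b') \<in> h v" "(b', c) \<in> h_star x"
    by (auto simp: h_rmul)
  moreover from this uv have "b = b'"
    unfolding xi_iff_agree by blast
  ultimately have "(a, c) \<in> h (rmul mult (meet u v) x)"
    by (auto simp: h_rmul h_meet)
  moreover from this d obtain c' where "(c, c') \<in> h_star y"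
    unfolding dstar_iff by blast
  ultimately have "(a, c') \<in> h (rmul mult (rmul mult (meet u v) x) y)"
    by (auto simp: h_rmul)
  then show "z \<in> {z. a \<in> Domain (h z)}"
    using le by (auto simp: sl_le_iff_subset h_rmul)
qed

lemma Domain_f_xi:
  "(\<And>x. x \<in> X \<Longrightarrow> a \<in> Domain (h x)) \<Longrightarrow> z \<in> f_xi mult meet xi delta X \<Longrightarrow> a \<in> Domain (h z)"
  using f_xi_least[OF f_closed_Domain, of X a] by blast

lemma transf_conditions: "transf_conditions mult meet xi delta"
proof
  fix x y z u v
  show "(u, v) \<in> xi \<Longrightarrow> (mult x u, mult x v) \<in> xi"
    by (auto simp: xi_iff_agree h_mult dest: single_valued_hD)
  show "sl_le meet x y \<Longrightarrow> (x, y) \<in> xi"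
    by (auto simp: xi_iff_agree sl_le_iff_subset dest: single_valued_hD)
  show "(x, y) \<in> delta \<Longrightarrow> (mult u x, y) \<in> delta"
    by (auto simp: delta_iff_Range_Domain h_mult)
  show "mult x (meet y z) = meet (mult x y) (mult x z)"
    by (rule h_eqI) (auto simp: h_mult h_meet dest: single_valued_hD)
  show "sl_le meet x y \<and> sl_le meet u v \<and> (y, v) \<in> xi \<Longrightarrow> (u, x) \<in> xi"
    unfolding xi_iff_agree sl_le_iff_subset by blast
  show "(x, y) \<in> xi \<Longrightarrow> mult (meet x y) u = meet (mult x u) (mult y u)"
    by (rule h_eqI) (auto simp: xi_iff_agree h_mult h_meet)
next
  fix x y
  assume "meet x y \<in> f_xi mult meet xi delta {x}"
  then have dom: "a \<in> Domain (h x) \<Longrightarrow> a \<in> Domain (h x \<inter> h y)" for a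
    using Domain_f_xi[of "{x}" a "meet x y"] by (simp add: h_meet)
  show "sl_le meet x y"
    unfolding sl_le_iff_subset
  proof (rule subrelI)
    fix a b
    assume ab: "(a, b) \<in> h x"
    then obtain c where ac: "(a, c) \<in> h x" and "(a, c) \<in> h y"
      using dom by blast
    with single_valued_hD[OF ab ac] show "(a, b) \<in> h y"
      by simp
  qed
next
  fix x y
  assume "meet x y \<in> f_xi mult meet xi delta {x, y}"
  then have dom: "a \<in> Domain (h x) \<Longrightarrow> a \<in> Domain (h y) \<Longrightarrow> a \<in> Domain (h x \<inter> h y)"
    for a
    using Domain_f_xi[of "{x, y}" a "meet x y"] by (auto simp: h_meet)
  show "(x, y) \<in> xi"
    unfolding xi_iff_agree
  proof (intro allI impI)
    fix a b c
    assume ab: "(a, b) \<in> h x" and ac: "(a, c) \<in> h y"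
    then obtain d where "(a, d) \<in> h x" and "(a, d) \<in> h y"
      using dom by blast
    with ab ac show "b = c"
      using single_valued_hD by blast
  qed
next
  fix x y
  assume "mult x y \<in> f_xi mult meet xi delta {x}"
  then have dom: "a \<in> Domain (h x) \<Longrightarrow> a \<in> Domain (h x O h y)" for a
    using Domain_f_xi[of "{x}" a "mult x y"] by (simp add: h_mult)
  show "(x, y) \<in> delta"
    unfolding delta_iff_Range_Domain
  proof
    fix b
    assume "b \<in> Range (h x)"
    then obtain a where ab: "(a, b) \<in> h x" by blast
    then obtain b' where ab': "(a, b') \<in> h x" and "b' \<in> Domain (h y)"
      using dom by blast
    with single_valued_hD[OF ab ab'] show "b \<in> Domain (h y)"
      by simp
  qed
qed

end

fun lmul :: "('a \<Rightarrow> 'a \<Rightarrow> 'a) \<Rightarrow> 'a option \<Rightarrow> 'a \<Rightarrow> 'a" where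
  "lmul mult None x = x"
| "lmul mult (Some t) x = mult t x"

locale transf_system =
  mult: semigroup mult + meet: semilattice meet + transf_conditions mult meet xi delta
  for mult meet :: "'a \<Rightarrow> 'a \<Rightarrow> 'a" and xi delta :: "('a \<times> 'a) set"
begin

abbreviation fclosed :: "'a set \<Rightarrow> bool" where
  "fclosed H \<equiv> f_closed mult meet xi delta H"

lemma xi_refl: "(x, x) \<in> xi"
  by (simp add: sl_le_imp_xi sl_le_def)

lemma fclosed_upward: "fclosed H \<Longrightarrow> u \<in> H \<Longrightarrow> sl_le meet u z \<Longrightarrow> z \<in> H"
  using f_closedD[of mult meet xi delta H u u None None z None] xi_refl by simp

lemma fclosed_meetD:
  assumes "fclosed H" and "meet u z \<in> H"
  shows "u \<in> H"
  using fclosed_upward[OF assms, of u] by (simp add: sl_le_def meet.commute meet.left_commute)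

lemma fclosed_left_factor: "fclosed H \<Longrightarrow> mult z t \<in> H \<Longrightarrow> z \<in> H"
  using f_closedD[of mult meet xi delta H "mult z t" "mult z t" None None z "Some t"] xi_refl
  by (simp add: sl_le_def)

lemma fclosed_meet: "fclosed H \<Longrightarrow> (u, v) \<in> xi \<Longrightarrow> u \<in> H \<Longrightarrow> v \<in> H \<Longrightarrow> meet u v \<in> H"
  using f_closedD[of mult meet xi delta H u v None None "meet u v" None] by (simp add: sl_le_def)

lemma fclosed_mult: "fclosed H \<Longrightarrow> u \<in> H \<Longrightarrow> (u, y) \<in> delta \<Longrightarrow> mult u y \<in> H"
  using f_closedD[of mult meet xi delta H u u None "Some y" "mult u y" None] xi_refl
  by (simp add: sl_le_def)

lemma fclosed_meet_mult:
  "fclosed H \<Longrightarrow> (u, v) \<in> xi \<Longrightarrow> u \<in> H \<Longrightarrow> mult v x \<in> H \<Longrightarrow> mult (meet u v) x \<in> H"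
  using f_closedD[of mult meet xi delta H u v "Some x" None "mult (meet u v) x" None]
  by (simp add: sl_le_def)

lemma mult_right_mono: "sl_le meet a b \<Longrightarrow> sl_le meet (mult a c) (mult b c)"
  using mult_meet_distrib_right[of a b c] sl_le_imp_xi[of a b] by (simp add: sl_le_def)

lemma fclosed_equiv_trans:
  assumes H: "fclosed H" and st: "meet s t \<in> H" and tr: "meet t r \<in> H"
  shows "meet s r \<in> H"
proof -
  have "(meet t r, meet s t) \<in> xi"
    using xi_antimono[of "meet s t" t "meet t r" t] xi_refl
    by (simp add: sl_le_def meet.commute meet.left_commute)
  then have "meet (meet t r) (meet s t) \<in> H"
    using fclosed_meet H st tr by blast
  then show ?thesis
    by (rule fclosed_upward[OF H])
      (simp add: sl_le_def meet.assoc meet.commute meet.left_commute)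
qed

lemma fclosed_equiv_mult:
  assumes H: "fclosed H" and st: "meet s t \<in> H" and s: "mult s x \<in> H"
  shows "mult t x \<in> H" and "meet (mult s x) (mult t x) \<in> H"
proof -
  have le_s: "sl_le meet (meet s t) s" and le_t: "sl_le meet (meet s t) t"
    by (simp_all add: sl_le_def meet.commute meet.left_commute)
  with H st s have m: "mult (meet s t) x \<in> H"
    using fclosed_meet_mult[OF H sl_le_imp_xi[OF le_s] st s] by (simp add: sl_le_def)
  have "sl_le meet (mult (meet s t) x) (mult s x)" and t: "sl_le meet (mult (meet s t) x) (mult t x)"
    using le_s le_t by (simp_all add: mult_right_mono)
  then have "sl_le meet (mult (meet s t) x) (meet (mult s x) (mult t x))"
    unfolding sl_le_def by (metis meet.assoc)
  with t show "mult t x \<in> H" and "meet (mult s x) (mult t x) \<in> H"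
    using fclosed_upward[OF H m] by blast+
qed

definition fclass :: "'a set \<Rightarrow> 'a \<Rightarrow> 'a set" where
  "fclass H t = {s. meet s t \<in> H}"

definition carrier_code :: "'a set \<Rightarrow> 'a option set" where
  "carrier_code H = insert None (Some ` H)"

text \<open>The point \<open>(H, e)\<close> resp. \<open>(H, [t])\<close> for \<open>a = None\<close> resp. \<open>a = Some t\<close>,
  encoded in \<^typ>\<open>'a option set set\<close>: the code of \<open>H\<close> is its only member containing
  \<^const>\<open>None\<close>.\<close>

definition point :: "'a set \<Rightarrow> 'a option \<Rightarrow> 'a option set set" where
  "point H a = insert (carrier_code H) ((\<lambda>t. Some ` fclass H t) ` set_option a)"

lemma point_members_None: "{c \<in> point H a. None \<in> c} = {carrier_code H}"
  by (auto simp: point_def carrier_code_def)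

lemma point_members_not_None:
  "{c \<in> point H a. None \<notin> c} = (\<lambda>t. Some ` fclass H t) ` set_option a"
  by (auto simp: point_def carrier_code_def)

lemma carrier_code_inject: "carrier_code H = carrier_code H' \<longleftrightarrow> H = H'"
proof
  assume "carrier_code H = carrier_code H'"
  then have "Some ` H = Some ` H'"
    unfolding carrier_code_def by (metis Diff_insert_absorb image_iff option.distinct(1))
  then show "H = H'"
    by (simp add: inj_image_eq_iff)
qed simp

lemma point_eqD:
  assumes eq: "point H a = point H' b" and a: "set_option a \<subseteq> H"
  shows "H' = H" and "rel_option (\<lambda>s t. meet s t \<in> H) a b"
proof -
  show H': "H' = H"
    using point_members_None[of H a] point_members_None[of H' b] eq
    by (simp add: carrier_code_inject)
  have classes: "(\<lambda>t. Some ` fclass H t) ` set_option a = (\<lambda>t. Some ` fclass H t) ` set_option b"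
    using point_members_not_None[of H a] point_members_not_None[of H' b] eq H' by simp
  show "rel_option (\<lambda>s t. meet s t \<in> H) a b"
  proof (cases a)
    case None
    with classes show ?thesis by simp
  next
    case (Some s)
    with classes obtain t where b: "b = Some t" and "Some ` fclass H s = Some ` fclass H t"
      by (cases b) auto
    then have "fclass H s = fclass H t"
      by (simp add: inj_image_eq_iff)
    moreover have "s \<in> fclass H s"
      using a Some by (simp add: fclass_def)
    ultimately show ?thesis
      using Some b by (simp add: fclass_def)
  qed
qed

lemma point_eqI:
  assumes H: "fclosed H" and st: "meet s t \<in> H"
  shows "point H (Some s) = point H (Some t)"
proof -
  have "meet t s \<in> H"
    using st by (simp add: meet.commute)
  then have "fclass H s = fclass H t"
    using st unfolding fclass_def by (blast intro: fclosed_equiv_trans[OF H])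
  then show ?thesis
    by (simp add: point_def)
qed

definition rep :: "'a \<Rightarrow> ('a option set set \<times> 'a option set set) set" where
  "rep x = {(point H a, point H (Some (lmul mult a x))) | H a.
     fclosed H \<and> set_option a \<subseteq> H \<and> lmul mult a x \<in> H}"

lemma rep_DomainE:
  assumes "(p, q) \<in> rep x"
  obtains H a where "fclosed H" "set_option a \<subseteq> H" "p = point H a"
  using assms unfolding rep_def by blast

lemma rep_iff:
  assumes H: "fclosed H" and a: "set_option a \<subseteq> H"
  shows "(point H a, q) \<in> rep x \<longleftrightarrow> lmul mult a x \<in> H \<and> q = point H (Some (lmul mult a x))"
proof
  assume "(point H a, q) \<in> rep x"
  then obtain H' b where eq: "point H a = point H' b" and b: "lmul mult b x \<in> H'"
    and q: "q = point H' (Some (lmul mult b x))"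
    unfolding rep_def by blast
  have "H' = H" and ab: "rel_option (\<lambda>s t. meet s t \<in> H) a b"
    using point_eqD[OF eq a] by simp_all
  show "lmul mult a x \<in> H \<and> q = point H (Some (lmul mult a x))"
  proof (cases a)
    case None
    with ab b q \<open>H' = H\<close> show ?thesis by simp
  next
    case (Some s)
    with ab obtain t where t: "b = Some t" "meet t s \<in> H"
      by (auto simp: meet.commute elim: option.rel_cases)
    then have "mult s x \<in> H" "meet (mult t x) (mult s x) \<in> H"
      using fclosed_equiv_mult[OF H] b \<open>H' = H\<close> by simp_all
    with Some t q \<open>H' = H\<close> show ?thesis
      using point_eqI[OF H] by simp
  qed
qed (use assms in \<open>auto simp: rep_def\<close>)

lemma rep_generator:
  "fclosed H \<Longrightarrow> x \<in> H \<Longrightarrow> (point H None, point H (Some x)) \<in> rep x"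
  by (simp add: rep_iff)

lemma lmul_mult: "lmul mult a (mult x y) = mult (lmul mult a x) y"
  by (cases a) (simp_all add: mult.assoc)

lemma lmul_meet: "lmul mult a (meet x y) = meet (lmul mult a x) (lmul mult a y)"
  by (cases a) (simp_all add: mult_meet_distrib_left)

lemma single_valued_rep: "single_valued (rep x)"
proof (rule single_valuedI)
  fix p q q'
  assume "(p, q) \<in> rep x" "(p, q') \<in> rep x"
  moreover from this obtain H a where "fclosed H" "set_option a \<subseteq> H" "p = point H a"
    by (blast elim: rep_DomainE)
  ultimately show "q = q'"
    by (simp add: rep_iff)
qed

lemma rep_mult: "rep (mult x y) = rep x O rep y"
proof (intro equalityI subrelI)
  fix p q
  assume pq: "(p, q) \<in> rep (mult x y)"
  then obtain H a where H: "fclosed H" "set_option a \<subseteq> H" and p: "p = point H a"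
    by (rule rep_DomainE)
  with pq have "mult (lmul mult a x) y \<in> H" "q = point H (Some (mult (lmul mult a x) y))"
    by (simp_all add: rep_iff lmul_mult)
  moreover from this have ax: "lmul mult a x \<in> H"
    using fclosed_left_factor H by blast
  ultimately have "(point H (Some (lmul mult a x)), q) \<in> rep y"
    using H by (simp add: rep_iff)
  moreover have "(p, point H (Some (lmul mult a x))) \<in> rep x"
    using H p ax by (simp add: rep_iff)
  ultimately show "(p, q) \<in> rep x O rep y"
    by blast
next
  fix p q
  assume "(p, q) \<in> rep x O rep y"
  then obtain r where pr: "(p, r) \<in> rep x" and rq: "(r, q) \<in> rep y" by blast
  from pr obtain H a where H: "fclosed H" "set_option a \<subseteq> H" and p: "p = point H a"
    by (rule rep_DomainE)
  with pr rq show "(p, q) \<in> rep (mult x y)"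
    by (auto simp: rep_iff lmul_mult)
qed

lemma rep_meet: "rep (meet x y) = rep x \<inter> rep y"
proof (intro equalityI subrelI)
  fix p q
  assume pq: "(p, q) \<in> rep (meet x y)"
  then obtain H a where H: "fclosed H" "set_option a \<subseteq> H" and p: "p = point H a"
    by (rule rep_DomainE)
  define u v where "u = lmul mult a x" and "v = lmul mult a y"
  from pq H p have uv: "meet u v \<in> H" and q: "q = point H (Some (meet u v))"
    by (simp_all add: rep_iff lmul_meet u_def v_def)
  have "u \<in> H" "v \<in> H"
    using fclosed_meetD[OF H(1), of u v] fclosed_meetD[OF H(1), of v u] uv
    by (simp_all add: meet.commute)
  moreover have "point H (Some (meet u v)) = point H (Some u)"
    and "point H (Some (meet u v)) = point H (Some v)"
    using uv point_eqI[OF H(1)] by (simp_all add: meet.commute meet.left_commute)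
  ultimately show "(p, q) \<in> rep x \<inter> rep y"
    using H p q by (simp add: rep_iff u_def v_def)
next
  fix p q
  assume pq: "(p, q) \<in> rep x \<inter> rep y"
  then obtain H a where H: "fclosed H" "set_option a \<subseteq> H" and p: "p = point H a"
    by (blast elim: rep_DomainE)
  define u v where "u = lmul mult a x" and "v = lmul mult a y"
  from pq H p have "u \<in> H" "v \<in> H" and uv: "point H (Some u) = point H (Some v)"
    and q: "q = point H (Some u)"
    by (auto simp: rep_iff u_def v_def)
  have "meet u v \<in> H"
    using point_eqD(2)[OF uv] \<open>u \<in> H\<close> by simp
  moreover have "point H (Some (meet u v)) = point H (Some u)"
    using point_eqI[OF H(1)] calculation by (simp add: meet.commute meet.left_commute)
  ultimately show "(p, q) \<in> rep (meet x y)"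
    using H p q by (simp add: rep_iff lmul_meet u_def v_def)
qed

lemma xi_iff_semicompat_rep: "(x, y) \<in> xi \<longleftrightarrow> semicompat (rep x) (rep y)"
  unfolding semicompat_single_valued_iff[OF single_valued_rep single_valued_rep]
proof (intro iffI allI impI)
  fix p q q'
  assume xy: "(x, y) \<in> xi" and pq: "(p, q) \<in> rep x" and pq': "(p, q') \<in> rep y"
  from pq obtain H a where H: "fclosed H" "set_option a \<subseteq> H" and p: "p = point H a"
    by (rule rep_DomainE)
  have "(lmul mult a x, lmul mult a y) \<in> xi"
    using xy xi_left_regular by (cases a) auto
  moreover from pq pq' H p have "lmul mult a x \<in> H" and "lmul mult a y \<in> H"
    and q: "q = point H (Some (lmul mult a x))" and q': "q' = point H (Some (lmul mult a y))"
    by (simp_all add: rep_iff)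
  ultimately have "meet (lmul mult a x) (lmul mult a y) \<in> H"
    using fclosed_meet[OF H(1)] by blast
  then show "q = q'"
    unfolding q q' by (rule point_eqI[OF H(1)])
next
  assume agree: "\<forall>p q q'. (p, q) \<in> rep x \<longrightarrow> (p, q') \<in> rep y \<longrightarrow> q = q'"
  define H where "H = f_xi mult meet xi delta {x, y}"
  have H: "fclosed H" "x \<in> H" "y \<in> H"
    unfolding H_def using f_xi_closed f_xi_subset[of "{x, y}"] by auto
  then have "point H (Some x) = point H (Some y)"
    using agree rep_generator[of H x] rep_generator[of H y] by blast
  then have "rel_option (\<lambda>s t. meet s t \<in> H) (Some x) (Some y)"
    using H by (intro point_eqD(2)) simp_all
  then have "meet x y \<in> H"
    by simp
  then show "(x, y) \<in> xi"
    unfolding H_def by (rule f_xi_meet_imp_xi)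
qed

lemma delta_iff_semiadj_rep: "(x, y) \<in> delta \<longleftrightarrow> semiadj (rep x) (rep y)"
  unfolding semiadj_def
proof
  assume xy: "(x, y) \<in> delta"
  show "Range (rep x) \<subseteq> Domain (rep y)"
  proof
    fix q
    assume "q \<in> Range (rep x)"
    then obtain p where pq: "(p, q) \<in> rep x" by blast
    then obtain H a where H: "fclosed H" "set_option a \<subseteq> H" and p: "p = point H a"
      by (rule rep_DomainE)
    with pq have ax: "lmul mult a x \<in> H" and q: "q = point H (Some (lmul mult a x))"
      by (simp_all add: rep_iff)
    have "(lmul mult a x, y) \<in> delta"
      using xy delta_left_ideal by (cases a) auto
    then have "mult (lmul mult a x) y \<in> H"
      using fclosed_mult H ax by blast
    then have "(q, point H (Some (mult (lmul mult a x) y))) \<in> rep y"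
      using H ax q by (simp add: rep_iff)
    then show "q \<in> Domain (rep y)"
      by blast
  qed
next
  assume adj: "Range (rep x) \<subseteq> Domain (rep y)"
  define H where "H = f_xi mult meet xi delta {x}"
  have H: "fclosed H" "x \<in> H"
    unfolding H_def using f_xi_closed f_xi_subset[of "{x}"] by auto
  then have "point H (Some x) \<in> Domain (rep y)"
    using adj rep_generator[of H x] by blast
  then have "mult x y \<in> H"
    using H by (auto simp: rep_iff)
  then show "(x, y) \<in> delta"
    unfolding H_def by (rule f_xi_mult_imp_delta)
qed

lemma rep_subset_imp_sl_le:
  assumes "rep x \<subseteq> rep y"
  shows "sl_le meet x y"
proof -
  define H where "H = f_xi mult meet xi delta {x}"
  have H: "fclosed H" "x \<in> H"
    unfolding H_def using f_xi_closed f_xi_subset[of "{x}"] by auto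
  then have "(point H None, point H (Some x)) \<in> rep (meet x y)"
    using rep_generator[of H x] assms by (auto simp: rep_meet)
  then have "meet x y \<in> H"
    using H by (simp add: rep_iff)
  then show ?thesis
    unfolding H_def by (rule f_xi_meet_imp_sl_le)
qed

lemma inj_rep: "inj rep"
proof (rule injI)
  fix x y
  assume "rep x = rep y"
  then have "sl_le meet x y" and "sl_le meet y x"
    by (simp_all add: rep_subset_imp_sl_le)
  then show "x = y"
    unfolding sl_le_def by (simp add: meet.commute)
qed

lemma transf_representation: "transf_representation mult meet xi delta rep"
  by unfold_locales
    (simp_all add: inj_rep single_valued_rep rep_mult rep_meet
      xi_iff_semicompat_rep delta_iff_semiadj_rep)

end

theorem theorem1:
  fixes mult meet :: "'a \<Rightarrow> 'a \<Rightarrow> 'a"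
    and xi delta :: "('a \<times> 'a) set"
  assumes semigroup: "\<And>x y z. mult (mult x y) z = mult x (mult y z)"
    and meet_assoc: "\<And>x y z. meet (meet x y) z = meet x (meet y z)"
    and meet_comm: "\<And>x y. meet x y = meet y x"
    and meet_idem: "\<And>x. meet x x = x"
  shows
   "((\<exists>(A :: 'a option set set set) Phi h. transf_iso mult meet xi delta A Phi h)
     \<longleftrightarrow>
     ((\<forall>x u v. (u, v) \<in> xi \<longrightarrow> (mult x u, mult x v) \<in> xi)
      \<and> (\<forall>x y. sl_le meet x y \<longrightarrow> (x, y) \<in> xi)
      \<and> (\<forall>x y u. (x, y) \<in> delta \<longrightarrow> (mult u x, y) \<in> delta)
      \<and> (\<forall>x y z. mult x (meet y z) = meet (mult x y) (mult x z))
      \<and> (\<forall>x y u v. sl_le meet x y \<and> sl_le meet u v \<and> (y, v) \<in> xi \<longrightarrow> (u, x) \<in> xi)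
      \<and> (\<forall>x y u. (x, y) \<in> xi \<longrightarrow> mult (meet x y) u = meet (mult x u) (mult y u))
      \<and> (\<forall>x y. meet x y \<in> f_xi mult meet xi delta {x} \<longrightarrow> sl_le meet x y)
      \<and> (\<forall>x y. meet x y \<in> f_xi mult meet xi delta {x, y} \<longrightarrow> (x, y) \<in> xi)
      \<and> (\<forall>x y. mult x y \<in> f_xi mult meet xi delta {x} \<longrightarrow> (x, y) \<in> delta)))
    \<and> (\<forall>(A :: 'b set) Phi h. transf_iso mult meet xi delta A Phi h \<longrightarrow>
      ((\<forall>x u v. (u, v) \<in> xi \<longrightarrow> (mult x u, mult x v) \<in> xi)
      \<and> (\<forall>x y. sl_le meet x y \<longrightarrow> (x, y) \<in> xi)
      \<and> (\<forall>x y u. (x, y) \<in> delta \<longrightarrow> (mult u x, y) \<in> delta)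
      \<and> (\<forall>x y z. mult x (meet y z) = meet (mult x y) (mult x z))
      \<and> (\<forall>x y u v. sl_le meet x y \<and> sl_le meet u v \<and> (y, v) \<in> xi \<longrightarrow> (u, x) \<in> xi)
      \<and> (\<forall>x y u. (x, y) \<in> xi \<longrightarrow> mult (meet x y) u = meet (mult x u) (mult y u))
      \<and> (\<forall>x y. meet x y \<in> f_xi mult meet xi delta {x} \<longrightarrow> sl_le meet x y)
      \<and> (\<forall>x y. meet x y \<in> f_xi mult meet xi delta {x, y} \<longrightarrow> (x, y) \<in> xi)
      \<and> (\<forall>x y. mult x y \<in> f_xi mult meet xi delta {x} \<longrightarrow> (x, y) \<in> delta)))"
proof -
  have "semigroup mult" "semilattice meet"
    by unfold_locales (fact semigroup meet_assoc meet_comm meet_idem)+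
  then have sufficient: "transf_conditions mult meet xi delta \<Longrightarrow>
      transf_iso mult meet xi delta UNIV (range (transf_system.rep mult meet xi delta))
        (transf_system.rep mult meet xi delta)"
    by (intro representation_imp_transf_iso transf_system.transf_representation
        transf_system.intro)
  have necessary: "transf_iso mult meet xi delta A Phi h \<Longrightarrow> transf_conditions mult meet xi delta"
    for A :: "'c set" and Phi h
    by (rule transf_representation.transf_conditions[OF transf_iso_imp_representation])
  have "(\<exists>(A :: 'a option set set set) Phi h. transf_iso mult meet xi delta A Phi h)
      \<longleftrightarrow> transf_conditions mult meet xi delta"
    and "\<forall>(A :: 'b set) Phi h. transf_iso mult meet xi delta A Phi h
      \<longrightarrow> transf_conditions mult meet xi delta"
    using sufficient necessary by blast+
  then show ?thesis
    by (simp only: transf_conditions_def conj_assoc)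
qed

end
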